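(* For every class of graphs $\mathcal{G}$, $\operatorname{rtw}(\widehat{\mathcal{G}})\leq \max(\operatorname{rtw}(\mathcal{G}),1)$.
   Context: A class of graphs is a collection of graphs closed under isomorphism. For a class $\mathcal{G}$, $\widehat{\mathcal{G}}$ denotes the class of graphs $G$ for which there exists a set $Z\subseteq V(G)$ of vertices each of degree exactly $1$ in $G$ such that $G-Z\in\mathcal{G}$. The strong product $H\boxtimes P$ has vertex set $V(H)\times V(P)$, distinct pairs adjacent if adjacent or equal in each coordinate. The row treewidth $\operatorname{rtw}(G)$ of a graph $G$ is the minimum $b$ such that there is a graph $H$ with treewidth at most $b$ and a path $P$ with $G$ isomorphic to a subgraph of $H\boxtimes P$. The row treewidth $\operatorname{rtw}(\mathcal{G})$ of a class is the maximum row treewidth of a graph in $\mathcal{G}$, or $\infty$ if no maximum exists. *)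

theory Defs
  imports Main "HOL-Library.Extended_Nat"
begin

text \<open>A (finite, simple, undirected) graph: vertex set and set of 2-element edges.\<close>
type_synonym 'a graph = "'a set \<times> 'a set set"

definition verts :: "'a graph \<Rightarrow> 'a set" where "verts G = fst G"
definition edges :: "'a graph \<Rightarrow> 'a set set" where "edges G = snd G"

definition is_graph :: "'a graph \<Rightarrow> bool" where
  "is_graph G \<longleftrightarrow> finite (verts G) \<and> (\<forall>e\<in>edges G. card e = 2 \<and> e \<subseteq> verts G)"

definition degree :: "'a graph \<Rightarrow> 'a \<Rightarrow> nat" where
  "degree G v = card {e \<in> edges G. v \<in> e}"

definition delete_verts :: "'a graph \<Rightarrow> 'a set \<Rightarrow> 'a graph" where
  "delete_verts G Z = (verts G - Z, {e \<in> edges G. e \<inter> Z = {}})"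

definition induced :: "'a graph \<Rightarrow> 'a set \<Rightarrow> 'a graph" where
  "induced G S = (S \<inter> verts G, {e \<in> edges G. e \<subseteq> S})"

definition connected_graph :: "'a graph \<Rightarrow> bool" where
  "connected_graph G \<longleftrightarrow>
     (\<forall>u\<in>verts G. \<forall>v\<in>verts G. (u, v) \<in> {(x, y). {x, y} \<in> edges G}\<^sup>*)"

definition is_tree :: "'a graph \<Rightarrow> bool" where
  "is_tree T \<longleftrightarrow> is_graph T \<and> verts T \<noteq> {} \<and> connected_graph T
                 \<and> card (edges T) = card (verts T) - 1"

definition tree_decomp :: "'a graph \<Rightarrow> nat graph \<Rightarrow> (nat \<Rightarrow> 'a set) \<Rightarrow> bool" where
  "tree_decomp G T B \<longleftrightarrow> is_tree T
     \<and> (\<forall>t\<in>verts T. B t \<subseteq> verts G)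
     \<and> (\<forall>v\<in>verts G. \<exists>t\<in>verts T. v \<in> B t)
     \<and> (\<forall>e\<in>edges G. \<exists>t\<in>verts T. e \<subseteq> B t)
     \<and> (\<forall>v\<in>verts G. connected_graph (induced T {t \<in> verts T. v \<in> B t}))"

definition decomp_width :: "nat graph \<Rightarrow> (nat \<Rightarrow> 'a set) \<Rightarrow> nat" where
  "decomp_width T B = Max ((\<lambda>t. card (B t)) ` verts T) - 1"

definition treewidth :: "'a graph \<Rightarrow> nat" where
  "treewidth G = (LEAST k. \<exists>T B. tree_decomp G T B \<and> decomp_width T B = k)"

definition strong_product :: "'a graph \<Rightarrow> 'b graph \<Rightarrow> ('a \<times> 'b) graph" where
  "strong_product H P = (verts H \<times> verts P,
     {{(a, b), (c, d)} | a b c d. a \<in> verts H \<and> c \<in> verts H \<and> b \<in> verts P \<and> d \<in> verts P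
        \<and> (a, b) \<noteq> (c, d) \<and> (a = c \<or> {a, c} \<in> edges H) \<and> (b = d \<or> {b, d} \<in> edges P)})"

text \<open>The path on n vertices 0,...,n-1 (every path is isomorphic to one of these).\<close>
definition path_graph :: "nat \<Rightarrow> nat graph" where
  "path_graph n = ({0..<n}, {{i, Suc i} | i. Suc i < n})"

text \<open>G is isomorphic to a (not necessarily induced) subgraph of K.\<close>
definition subgraph_iso :: "'a graph \<Rightarrow> 'b graph \<Rightarrow> bool" where
  "subgraph_iso G K \<longleftrightarrow> (\<exists>f. inj_on f (verts G) \<and> f ` verts G \<subseteq> verts K
      \<and> (\<forall>e\<in>edges G. f ` e \<in> edges K))"

definition graph_iso :: "'a graph \<Rightarrow> 'b graph \<Rightarrow> bool" where
  "graph_iso G K \<longleftrightarrow> (\<exists>f. bij_betw f (verts G) (verts K)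
      \<and> (\<forall>e. e \<subseteq> verts G \<longrightarrow> (e \<in> edges G \<longleftrightarrow> f ` e \<in> edges K)))"

definition row_treewidth :: "'a graph \<Rightarrow> nat" where
  "row_treewidth G = (LEAST b. \<exists>(H :: nat graph) n. is_graph H \<and> treewidth H \<le> b
       \<and> subgraph_iso G (strong_product H (path_graph n)))"

text \<open>A class of graphs: a set of finite graphs (vertices in nat, which is no loss since
  every finite graph is isomorphic to one on nat) closed under isomorphism.\<close>
definition graph_class :: "nat graph set \<Rightarrow> bool" where
  "graph_class C \<longleftrightarrow> (\<forall>G\<in>C. is_graph G)
     \<and> (\<forall>G\<in>C. \<forall>G'. is_graph G' \<and> graph_iso G G' \<longrightarrow> G' \<in> C)"

definition pendant_ext :: "nat graph set \<Rightarrow> nat graph set" where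
  "pendant_ext C = {G. is_graph G \<and> (\<exists>Z \<subseteq> verts G. (\<forall>z\<in>Z. degree G z = 1)
        \<and> delete_verts G Z \<in> C)}"

definition rtw_class :: "nat graph set \<Rightarrow> enat" where
  "rtw_class C = (if \<exists>G\<in>C. \<forall>G'\<in>C. row_treewidth G' \<le> row_treewidth G
     then enat (Max (row_treewidth ` C)) else \<infinity>)"

end

theory Submission
  imports Defs
begin

text \<open>Let \<open>G - Z\<close> be a subgraph of \<open>H \<boxtimes> P\<close> with \<open>tw H \<le> b\<close>, and let the vertices of \<open>Z\<close>
  have degree at most one. Put them back one at a time: a vertex \<open>w\<close> whose neighbour sits at
  \<open>(h, p)\<close> goes to \<open>(x, p)\<close> for a new vertex \<open>x\<close> of \<open>H\<close> adjacent only to \<open>h\<close>; an isolated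
  \<open>w\<close> goes to an isolated new \<open>x\<close> in a new row of \<open>P\<close>. Attaching such an \<open>x\<close> to \<open>H\<close> keeps the
  treewidth at most \<open>max (tw H) 1\<close>: hang a new bag \<open>{x, h}\<close> off a bag containing \<open>h\<close>.\<close>

lemma verts_pair [simp]: "verts (V, E) = V"
  by (simp add: verts_def)

lemma edges_pair [simp]: "edges (V, E) = E"
  by (simp add: edges_def)

lemma is_graph_finite_edges: "is_graph G \<Longrightarrow> finite (edges G)"
  unfolding is_graph_def by (meson Pow_iff finite_Pow_iff finite_subset subsetI)

lemma is_graph_delete_verts: "is_graph G \<Longrightarrow> is_graph (delete_verts G Z)"
  unfolding is_graph_def delete_verts_def by auto

lemma delete_verts_empty [simp]: "delete_verts G {} = G"
  unfolding delete_verts_def verts_def edges_def by simp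

lemma delete_verts_delete_verts: "delete_verts (delete_verts G A) B = delete_verts G (A \<union> B)"
  unfolding delete_verts_def by auto

lemma degree_delete_verts_le:
  "finite (edges G) \<Longrightarrow> degree (delete_verts G Z) v \<le> degree G v"
  unfolding degree_def delete_verts_def by (rule card_mono) auto

lemma adjacency_rtrancl_sym:
  assumes "(u, v) \<in> {(x, y). {x, y} \<in> E}\<^sup>*"
  shows "(v, u) \<in> {(x, y). {x, y} \<in> E}\<^sup>*"
proof -
  have "{(x, y). {x, y} \<in> E}\<inverse> = {(x, y). {x, y} \<in> E}"
    by (auto simp: insert_commute)
  with rtrancl_converseI[OF assms] show ?thesis by simp
qed

lemma connected_graph_subsingleton: "verts G \<subseteq> {a} \<Longrightarrow> connected_graph G"
  unfolding connected_graph_def by auto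

lemma connected_graph_add_leaf:
  assumes con: "connected_graph G" and t: "t \<in> verts G"
  shows "connected_graph (insert t' (verts G), insert {t, t'} (edges G))"
proof -
  let ?R = "{(x, y). {x, y} \<in> insert {t, t'} (edges G)}"
  have to_t: "(u, t) \<in> ?R\<^sup>*" if "u \<in> insert t' (verts G)" for u
  proof (cases "u = t'")
    case True
    then have "(u, t) \<in> ?R" by (simp add: insert_commute)
    then show ?thesis by (rule r_into_rtrancl)
  next
    case False
    with that have "u \<in> verts G" by simp
    with con t have "(u, t) \<in> {(x, y). {x, y} \<in> edges G}\<^sup>*"
      unfolding connected_graph_def by blast
    then show ?thesis by (rule rtrancl_mono[THEN subsetD, rotated]) blast
  qed
  show ?thesis
    unfolding connected_graph_def edges_pair verts_pair
  proof (intro ballI)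
    fix u v assume "u \<in> insert t' (verts G)" and "v \<in> insert t' (verts G)"
    then have "(u, t) \<in> ?R\<^sup>*" "(t, v) \<in> ?R\<^sup>*"
      using to_t adjacency_rtrancl_sym[OF to_t] by blast+
    then show "(u, v) \<in> ?R\<^sup>*" by (rule rtrancl_trans)
  qed
qed

lemma is_tree_add_leaf:
  assumes T: "is_tree T" and t: "t \<in> verts T" and t': "t' \<notin> verts T"
  shows "is_tree (insert t' (verts T), insert {t, t'} (edges T))"
proof -
  have g: "is_graph T" and fin: "finite (verts T)"
    and card_edges: "card (edges T) = card (verts T) - 1"
    using T unfolding is_tree_def is_graph_def by auto
  have "{t, t'} \<notin> edges T" using g t' unfolding is_graph_def by auto
  moreover have "0 < card (verts T)" using fin t card_gt_0_iff by blast
  ultimately have "card (insert {t, t'} (edges T)) = card (insert t' (verts T)) - 1"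
    using card_edges fin t' is_graph_finite_edges[OF g] by simp
  moreover have "connected_graph (insert t' (verts T), insert {t, t'} (edges T))"
    using T t by (simp add: is_tree_def connected_graph_add_leaf)
  ultimately show ?thesis
    using g fin t t' unfolding is_tree_def is_graph_def by (auto simp: card_insert_if)
qed

text \<open>The old vertices of the new leaf bag \<open>S\<close> lie in \<open>B t\<close>, so their subtrees stay connected.\<close>

lemma tree_decomp_add_leaf:
  assumes td: "tree_decomp H T B" and x: "x \<notin> verts H"
    and t: "t \<in> verts T" and t': "t' \<notin> verts T"
    and S: "x \<in> S" "S \<subseteq> insert x (B t)" and E': "\<forall>e\<in>E'. e \<subseteq> S"
  shows "tree_decomp (insert x (verts H), edges H \<union> E')
           (insert t' (verts T), insert {t, t'} (edges T)) (B(t' := S))"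
proof -
  have T: "is_tree T" and bags: "\<forall>s\<in>verts T. B s \<subseteq> verts H"
    and covers: "\<forall>v\<in>verts H. \<exists>s\<in>verts T. v \<in> B s"
    and covers_edges: "\<forall>e\<in>edges H. \<exists>s\<in>verts T. e \<subseteq> B s"
    and subtrees: "\<forall>v\<in>verts H. connected_graph (induced T {s \<in> verts T. v \<in> B s})"
    using td unfolding tree_decomp_def by auto
  have t'_edges: "t' \<notin> e" if "e \<in> edges T" for e
    using T t' that unfolding is_tree_def is_graph_def by auto
  let ?T = "(insert t' (verts T), insert {t, t'} (edges T))"
  let ?B = "B(t' := S)"
  have "connected_graph (induced ?T {s \<in> verts ?T. v \<in> ?B s})"
    if v: "v \<in> insert x (verts H)" for v
  proof -
    let ?X = "{s \<in> verts T. v \<in> B s}"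
    consider "v = x" | "v \<noteq> x" "v \<notin> S" | "v \<noteq> x" "v \<in> S" by blast
    then show ?thesis
    proof cases
      case 1
      then have "verts (induced ?T {s \<in> verts ?T. v \<in> ?B s}) \<subseteq> {t'}"
        using bags x unfolding induced_def by auto
      then show ?thesis by (rule connected_graph_subsingleton)
    next
      case 2
      then have "induced ?T {s \<in> verts ?T. v \<in> ?B s} = induced T ?X"
        using t' unfolding induced_def by auto
      with 2 v subtrees show ?thesis by auto
    next
      case 3
      then have "t \<in> ?X" using S t by auto
      have "induced ?T {s \<in> verts ?T. v \<in> ?B s}
          = (insert t' (verts (induced T ?X)), insert {t, t'} (edges (induced T ?X)))"
        using 3 t' t'_edges \<open>t \<in> ?X\<close> unfolding induced_def by auto
      moreover have "t \<in> verts (induced T ?X)"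
        using \<open>t \<in> ?X\<close> unfolding induced_def by simp
      ultimately show ?thesis
        using 3 v subtrees connected_graph_add_leaf by fastforce
    qed
  qed
  then show ?thesis
    unfolding tree_decomp_def
  proof (intro conjI)
    show "is_tree ?T" using is_tree_add_leaf[OF T t t'] .
    show "\<forall>s\<in>verts ?T. ?B s \<subseteq> verts (insert x (verts H), edges H \<union> E')"
      using bags S t by auto
    show "\<forall>v\<in>verts (insert x (verts H), edges H \<union> E'). \<exists>s\<in>verts ?T. v \<in> ?B s"
      using covers S t' by force
    show "\<forall>e\<in>edges (insert x (verts H), edges H \<union> E'). \<exists>s\<in>verts ?T. e \<subseteq> ?B s"
      using covers_edges E' t' by force
  qed simp
qed

lemma treewidth_le: "tree_decomp H T B \<Longrightarrow> treewidth H \<le> decomp_width T B"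
  unfolding treewidth_def by (rule Least_le) blast

lemma tree_decomp_optimal:
  assumes "is_graph H"
  obtains T B where "tree_decomp H T B" "decomp_width T B = treewidth H"
proof -
  have "tree_decomp H ({0}, {}) (\<lambda>_. verts H)"
    using assms
    unfolding tree_decomp_def is_tree_def is_graph_def connected_graph_def induced_def
    by auto
  then have "\<exists>k T B. tree_decomp H T B \<and> decomp_width T B = k" by blast
  then have "\<exists>T B. tree_decomp H T B \<and> decomp_width T B = treewidth H"
    unfolding treewidth_def by (rule LeastI_ex)
  with that show ?thesis by blast
qed

definition add_vertex :: "'a graph \<Rightarrow> 'a \<Rightarrow> 'a set \<Rightarrow> 'a graph" where
  "add_vertex H x Y = (insert x (verts H), edges H \<union> (\<lambda>y. {x, y}) ` Y)"

lemma is_graph_add_vertex: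
  "is_graph H \<Longrightarrow> x \<notin> verts H \<Longrightarrow> Y \<subseteq> verts H \<Longrightarrow> is_graph (add_vertex H x Y)"
  unfolding is_graph_def add_vertex_def by (auto simp: card_insert_if)

lemma treewidth_add_vertex:
  assumes H: "is_graph H" and x: "x \<notin> verts H"
    and Y: "Y \<subseteq> verts H" "card Y \<le> 1"
  shows "treewidth (add_vertex H x Y) \<le> max (treewidth H) 1"
proof -
  obtain T B where td: "tree_decomp H T B" and width: "decomp_width T B = treewidth H"
    using tree_decomp_optimal[OF H] .
  have fin: "finite (verts T)" and ne: "verts T \<noteq> {}"
    using td unfolding tree_decomp_def is_tree_def is_graph_def by auto
  have fin_Y: "finite Y"
    using H Y(1) finite_subset unfolding is_graph_def by blast
  obtain t where t: "t \<in> verts T" and Yt: "Y \<subseteq> B t"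
  proof (cases "Y = {}")
    case True
    with ne that show ?thesis by blast
  next
    case False
    then obtain h where h: "h \<in> Y" by blast
    with Y(2) fin_Y have "Y = {h}" by (auto simp: card_le_Suc0_iff_eq)
    moreover obtain t where "t \<in> verts T" "h \<in> B t"
      using td h Y(1) unfolding tree_decomp_def by blast
    ultimately show ?thesis using that by blast
  qed
  obtain t' where t': "t' \<notin> verts T"
    using ex_new_if_finite[OF infinite_UNIV_nat fin] by blast
  let ?S = "insert x Y"
  have td': "tree_decomp (add_vertex H x Y)
      (insert t' (verts T), insert {t, t'} (edges T)) (B(t' := ?S))"
    unfolding add_vertex_def
    by (rule tree_decomp_add_leaf[OF td x t t']) (use Yt in auto)
  have "card ?S \<le> 2"
    using Y(2) fin_Y by (simp add: card_insert_if)
  have "(\<lambda>s. card ((B(t' := ?S)) s)) ` insert t' (verts T)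
      = insert (card ?S) ((\<lambda>s. card (B s)) ` verts T)"
    using t' by (auto intro!: image_cong)
  then have "decomp_width (insert t' (verts T), insert {t, t'} (edges T)) (B(t' := ?S))
      = max (card ?S) (Max ((\<lambda>s. card (B s)) ` verts T)) - 1"
    unfolding decomp_width_def using fin ne by simp
  also have "\<dots> \<le> max (treewidth H) 1"
    using width \<open>card ?S \<le> 2\<close> unfolding decomp_width_def by linarith
  finally show ?thesis using treewidth_le[OF td'] by linarith
qed

lemma verts_strong_product [simp]: "verts (strong_product H P) = verts H \<times> verts P"
  unfolding strong_product_def by simp

lemma verts_path_graph [simp]: "verts (path_graph n) = {0..<n}"
  unfolding path_graph_def by simp

lemma strong_product_edgeI:
  assumes "a \<in> verts H" "c \<in> verts H" "b \<in> verts P" "d \<in> verts P" "(a, b) \<noteq> (c, d)"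
    "a = c \<or> {a, c} \<in> edges H" "b = d \<or> {b, d} \<in> edges P"
  shows "{(a, b), (c, d)} \<in> edges (strong_product H P)"
  unfolding strong_product_def edges_pair using assms by blast

lemma edges_strong_product_mono:
  assumes "verts H \<subseteq> verts H'" "edges H \<subseteq> edges H'"
    "verts P \<subseteq> verts P'" "edges P \<subseteq> edges P'"
  shows "edges (strong_product H P) \<subseteq> edges (strong_product H' P')"
  using assms unfolding strong_product_def edges_pair by blast

lemma edges_path_graph_mono: "n \<le> n' \<Longrightarrow> edges (path_graph n) \<subseteq> edges (path_graph n')"
  unfolding path_graph_def by auto

lemma subgraph_iso_strong_product_add_vertex:
  assumes inj: "inj_on f (verts G - {w})"
    and verts_f: "f ` (verts G - {w}) \<subseteq> verts H \<times> {0..<n}"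
    and edges_f: "\<forall>e\<in>edges (delete_verts G {w}). f ` e \<in> edges (strong_product H (path_graph n))"
    and x: "x \<notin> verts H" and p: "p < n'" and n: "n \<le> n'"
    and edges_w: "\<forall>e\<in>edges G. w \<in> e \<longrightarrow>
      (f(w := (x, p))) ` e \<in> edges (strong_product (add_vertex H x Y) (path_graph n'))"
  shows "subgraph_iso G (strong_product (add_vertex H x Y) (path_graph n'))"
  unfolding subgraph_iso_def
proof (intro exI conjI)
  let ?f = "f(w := (x, p))"
  let ?K = "strong_product (add_vertex H x Y) (path_graph n')"
  have "inj_on ?f (verts G - {w})"
    using inj inj_on_cong[of "verts G - {w}" ?f f] by simp
  moreover have "?f w \<notin> ?f ` (verts G - {w})" using verts_f x by auto
  ultimately have "inj_on ?f (insert w (verts G - {w}))"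
    by (simp only: inj_on_insert Diff_idemp) blast
  then show "inj_on ?f (verts G)" by (rule inj_on_subset) blast
  show "?f ` verts G \<subseteq> verts ?K"
    using verts_f p n by (auto simp: add_vertex_def)
  have old: "edges (strong_product H (path_graph n)) \<subseteq> edges ?K"
    by (rule edges_strong_product_mono)
      (use n edges_path_graph_mono in \<open>auto simp: add_vertex_def\<close>)
  show "\<forall>e\<in>edges G. ?f ` e \<in> edges ?K"
  proof
    fix e assume e: "e \<in> edges G"
    show "?f ` e \<in> edges ?K"
    proof (cases "w \<in> e")
      case False
      then have "?f ` e = f ` e" by auto
      with False e edges_f old show ?thesis by (auto simp: delete_verts_def)
    qed (use e edges_w in blast)
  qed
qed

lemma row_treewidth_le:
  "is_graph (H :: nat graph) \<Longrightarrow> treewidth H \<le> b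
    \<Longrightarrow> subgraph_iso G (strong_product H (path_graph n)) \<Longrightarrow> row_treewidth G \<le> b"
  unfolding row_treewidth_def by (rule Least_le) blast

lemma row_treewidth_witness:
  fixes G :: "nat graph"
  assumes G: "is_graph G"
  obtains H :: "nat graph" and n
  where "is_graph H" "treewidth H \<le> row_treewidth G"
    "subgraph_iso G (strong_product H (path_graph n))"
proof -
  have "subgraph_iso G (strong_product G (path_graph 1))"
    unfolding subgraph_iso_def
  proof (intro exI conjI ballI)
    show "inj_on (\<lambda>v. (v, 0::nat)) (verts G)" by (auto simp: inj_on_def)
    show "(\<lambda>v. (v, 0::nat)) ` verts G \<subseteq> verts (strong_product G (path_graph 1))" by auto
    fix e assume e: "e \<in> edges G"
    then obtain a c where ac: "e = {a, c}" "a \<noteq> c" "a \<in> verts G" "c \<in> verts G"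
      using G unfolding is_graph_def by (auto simp: card_2_iff)
    then have "{(a, 0::nat), (c, 0)} \<in> edges (strong_product G (path_graph 1))"
      by (intro strong_product_edgeI) (use e in auto)
    with ac show "(\<lambda>v. (v, 0::nat)) ` e \<in> edges (strong_product G (path_graph 1))" by simp
  qed
  with G have "\<exists>b (H :: nat graph) n. is_graph H \<and> treewidth H \<le> b
      \<and> subgraph_iso G (strong_product H (path_graph n))"
    by blast
  then have "\<exists>(H :: nat graph) n. is_graph H \<and> treewidth H \<le> row_treewidth G
      \<and> subgraph_iso G (strong_product H (path_graph n))"
    unfolding row_treewidth_def by (rule LeastI_ex)
  with that show ?thesis by blast
qed

lemma row_treewidth_delete_vertex:
  fixes G :: "nat graph"
  assumes G: "is_graph G" and w: "w \<in> verts G" and deg: "degree G w \<le> 1"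
  shows "row_treewidth G \<le> max (row_treewidth (delete_verts G {w})) 1"
proof -
  obtain H :: "nat graph" and n
    where H: "is_graph H" "treewidth H \<le> row_treewidth (delete_verts G {w})"
      and "subgraph_iso (delete_verts G {w}) (strong_product H (path_graph n))"
    using row_treewidth_witness[OF is_graph_delete_verts[OF G]] .
  then obtain f where inj: "inj_on f (verts G - {w})"
    and verts_f: "f ` (verts G - {w}) \<subseteq> verts H \<times> {0..<n}"
    and edges_f: "\<forall>e\<in>edges (delete_verts G {w}). f ` e \<in> edges (strong_product H (path_graph n))"
    unfolding subgraph_iso_def by (auto simp: delete_verts_def)
  obtain x where x: "x \<notin> verts H"
    using H(1) ex_new_if_finite[OF infinite_UNIV_nat] unfolding is_graph_def by blast
  obtain Y p n' where Y: "Y \<subseteq> verts H" "card Y \<le> 1" and p: "p < n'" and n: "n \<le> n'"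
    and edges_w: "\<forall>e\<in>edges G. w \<in> e \<longrightarrow>
      (f(w := (x, p))) ` e \<in> edges (strong_product (add_vertex H x Y) (path_graph n'))"
  proof (cases "\<exists>e\<in>edges G. w \<in> e")
    case True
    then obtain e0 where e0: "e0 \<in> edges G" "w \<in> e0" by blast
    have unique: "e = e0" if "e \<in> edges G" "w \<in> e" for e
      using deg that e0 is_graph_finite_edges[OF G] card_le_Suc0_iff_eq[of "{e \<in> edges G. w \<in> e}"]
      unfolding degree_def by auto
    obtain a b where ab: "e0 = {a, b}" "a \<noteq> b" "e0 \<subseteq> verts G"
      using G e0 unfolding is_graph_def by (auto simp: card_2_iff)
    obtain v where v: "e0 = {w, v}" "v \<noteq> w" "v \<in> verts G"
    proof (cases "w = a")
      case True
      with ab that show ?thesis by simp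
    next
      case False
      with ab e0 have "w = b" by blast
      with ab have "e0 = {w, a}" by (simp add: insert_commute)
      with ab False that show ?thesis by auto
    qed
    have "f v \<in> verts H \<times> {0..<n}" using verts_f v by blast
    then obtain h p where fv: "f v = (h, p)" "h \<in> verts H" "p < n"
      by (cases "f v") simp
    have "{(x, p), (h, p)} \<in> edges (strong_product (add_vertex H x {h}) (path_graph n))"
      using fv x by (intro strong_product_edgeI) (auto simp: add_vertex_def)
    moreover have "(f(w := (x, p))) ` e0 = {(x, p), (h, p)}"
      using v fv by (simp add: insert_commute)
    ultimately have "\<forall>e\<in>edges G. w \<in> e \<longrightarrow>
      (f(w := (x, p))) ` e \<in> edges (strong_product (add_vertex H x {h}) (path_graph n))"
      using unique by auto
    with fv show ?thesis by (intro that[of "{h}" p n]) auto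
  next
    case False
    then show ?thesis by (intro that[of "{}" n "Suc n"]) simp_all
  qed
  have "subgraph_iso G (strong_product (add_vertex H x Y) (path_graph n'))"
    by (rule subgraph_iso_strong_product_add_vertex[OF inj verts_f edges_f x p n edges_w])
  moreover have "treewidth (add_vertex H x Y) \<le> max (row_treewidth (delete_verts G {w})) 1"
    using treewidth_add_vertex[OF H(1) x Y] H(2) by linarith
  ultimately show ?thesis
    using row_treewidth_le is_graph_add_vertex[OF H(1) x Y(1)] by blast
qed

lemma row_treewidth_delete_verts:
  fixes G :: "nat graph"
  assumes "is_graph G" "Z \<subseteq> verts G" "\<forall>z\<in>Z. degree G z \<le> 1"
  shows "row_treewidth G \<le> max (row_treewidth (delete_verts G Z)) 1"
proof -
  have "finite Z" using assms finite_subset unfolding is_graph_def by blast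
  then show ?thesis using assms
  proof (induction Z arbitrary: G rule: finite_induct)
    case (insert z Z)
    let ?G' = "delete_verts G {z}"
    have G: "is_graph G" and deg: "\<forall>v\<in>insert z Z. degree G v \<le> 1"
      using insert.prems by auto
    have "\<forall>v\<in>Z. degree ?G' v \<le> 1"
      using deg degree_delete_verts_le[OF is_graph_finite_edges[OF G]] order_trans by blast
    moreover have "Z \<subseteq> verts ?G'"
      using insert.hyps(2) insert.prems(2) unfolding delete_verts_def by auto
    ultimately have "row_treewidth ?G' \<le> max (row_treewidth (delete_verts G (insert z Z))) 1"
      using insert.IH[of ?G'] is_graph_delete_verts[OF G]
      by (simp add: delete_verts_delete_verts)
    moreover have "row_treewidth G \<le> max (row_treewidth ?G') 1"
      using G deg insert.prems(2) by (intro row_treewidth_delete_vertex) auto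
    ultimately show ?case by linarith
  qed simp
qed

lemma rtw_class_enatD:
  assumes "rtw_class C = enat k"
  shows "C \<noteq> {}" "\<forall>G\<in>C. row_treewidth G \<le> k"
proof -
  obtain G0 where G0: "G0 \<in> C" "\<forall>G\<in>C. row_treewidth G \<le> row_treewidth G0"
    and k: "k = Max (row_treewidth ` C)"
    using assms unfolding rtw_class_def by (auto split: if_splits)
  have "finite (row_treewidth ` C)"
    by (rule finite_subset[of _ "{..row_treewidth G0}"]) (use G0 in auto)
  with G0 k show "C \<noteq> {}" "\<forall>G\<in>C. row_treewidth G \<le> k" by auto
qed

lemma rtw_class_le_enat:
  assumes "C \<noteq> {}" "\<forall>G\<in>C. row_treewidth G \<le> k"
  shows "rtw_class C \<le> enat k"
proof -
  have fin: "finite (row_treewidth ` C)"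
    by (rule finite_subset[of _ "{..k}"]) (use assms in auto)
  have "Max (row_treewidth ` C) \<in> row_treewidth ` C"
    using Max_in[OF fin] assms(1) by blast
  then obtain G0 where G0: "G0 \<in> C" "row_treewidth G0 = Max (row_treewidth ` C)"
    by (metis imageE)
  with fin have "\<forall>G\<in>C. row_treewidth G \<le> row_treewidth G0" by simp
  with G0(1) have "rtw_class C = enat (Max (row_treewidth ` C))"
    unfolding rtw_class_def by auto
  with fin assms show ?thesis by simp
qed

lemma subset_pendant_ext: "\<forall>G\<in>C. is_graph G \<Longrightarrow> C \<subseteq> pendant_ext C"
  unfolding pendant_ext_def by (auto intro!: exI[of _ "{}"])

theorem mainTheorem3:
  fixes C :: "nat graph set"
  assumes "graph_class C"
  shows "rtw_class (pendant_ext C) \<le> max (rtw_class C) 1"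
proof (cases "rtw_class C")
  case (enat k)
  have "C \<subseteq> pendant_ext C"
    using assms subset_pendant_ext unfolding graph_class_def by blast
  then have "pendant_ext C \<noteq> {}" using rtw_class_enatD(1)[OF enat] by blast
  moreover have "\<forall>G\<in>pendant_ext C. row_treewidth G \<le> max k 1"
  proof
    fix G assume "G \<in> pendant_ext C"
    then obtain Z where "is_graph G" "Z \<subseteq> verts G" "\<forall>z\<in>Z. degree G z = 1"
      and "delete_verts G Z \<in> C"
      unfolding pendant_ext_def by blast
    with rtw_class_enatD(2)[OF enat] row_treewidth_delete_verts[of G Z]
    show "row_treewidth G \<le> max k 1" by fastforce
  qed
  ultimately have "rtw_class (pendant_ext C) \<le> enat (max k 1)"
    by (rule rtw_class_le_enat)
  with enat show ?thesis by (simp add: one_enat_def)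
qed simp

end
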